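(* Let $s,t,n$ be positive integers. Let $S_1$ be the set of lattice paths from $(0,0)$ to $(sn+1,tn)$ that avoid $A_{s,t}$, and $S_2$ the set of lattice paths from $(1,0)$ to $(sn,tn-1)$ that avoid $A_{s,t}$. Then \[ |S_1| = t\binom{sn+tn}{tn} - s\binom{sn+tn}{tn-1} \quad\text{and}\quad |S_2| = t\binom{sn+tn-2}{tn-1} - s\binom{sn+tn-2}{tn-2}. \]
   Context: A lattice path is a finite sequence of unit steps, each north $(0,1)$ or east $(1,0)$. For positive integers $s,t$, $A_{s,t}$ is the infinite staircase path that starts at $(0,t)$ and then takes $s$ steps east, $t$ steps north, $s$ steps east, $t$ steps north, and so on forever. A lattice path "avoids" $A_{s,t}$ if it does not touch or cross it, i.e. shares no lattice point with $A_{s,t}$. *)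

theory Defs
  imports Main
begin

text \<open>A lattice path is given by its starting point and its list of unit steps;
  a step True is an east step (1,0), a step False is a north step (0,1).\<close>

fun path_points :: "int \<times> int \<Rightarrow> bool list \<Rightarrow> (int \<times> int) list" where
  "path_points p [] = [p]"
| "path_points (x, y) (b # bs) =
     (x, y) # path_points (if b then (x + 1, y) else (x, y + 1)) bs"

text \<open>Lattice points of the infinite staircase path A_{s,t}: starting at (0,t),
  s east steps, t north steps, s east steps, ...\<close>

definition staircase_points :: "nat \<Rightarrow> nat \<Rightarrow> (int \<times> int) set" where
  "staircase_points s t =
     {(x, y). \<exists>k::nat.
        (y = int ((k + 1) * t) \<and> int (k * s) \<le> x \<and> x \<le> int ((k + 1) * s))
      \<or> (x = int ((k + 1) * s) \<and> int ((k + 1) * t) \<le> y \<and> y \<le> int ((k + 2) * t))}"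

definition lattice_paths :: "int \<times> int \<Rightarrow> int \<times> int \<Rightarrow> bool list set" where
  "lattice_paths p q = {bs. last (path_points p bs) = q}"

definition avoids :: "int \<times> int \<Rightarrow> bool list \<Rightarrow> nat \<Rightarrow> nat \<Rightarrow> bool" where
  "avoids p bs s t \<longleftrightarrow> set (path_points p bs) \<inter> staircase_points s t = {}"

definition zbinom :: "nat \<Rightarrow> int \<Rightarrow> int" where
  "zbinom m k = (if k < 0 then 0 else int (m choose nat k))"

end

theory Submission
  imports Defs
begin

(*
  A path is encoded by the list a of lengths of its east runs before each north step,
  together with the length k of its final east run.  A path starting on the x-axis
  at x0 avoids A_{s,t} iff after the j-th north step it lies strictly right of the
  staircase, i.e. s*(j div t) < x0 + (a_1 + ... + a_j) whenever j >= t; since these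
  partial sums are monotone it suffices to check the rows j = m*t.

  For S_1 (x0 = 0, end (sn+1, tn)) the final run is empty and a has length tn and sum
  sn+1; for S_2 (x0 = 1, end (sn, tn-1)) the list a @ [k] has length tn and sum sn-1.
  The avoidance conditions become "s*m < a_1+...+a_{mt} for 1 <= m <= n", resp.
  "s*m <= a_1+...+a_{mt} for 1 <= m < n".  By a cycle lemma for the walk
  q |-> (a_1+...+a_{c+tq}) - s*q, exactly t of the tn cyclic rotations of every such
  list satisfy the condition; double counting over rotations yields
  n * |S_i| = (number of compositions), a binomial coefficient, and a binomial
  identity turns this into the stated ballot-type formulas.
*)

lemma cycle_lemma_strict:
  fixes w :: "nat \<Rightarrow> int"
  assumes n: "0 < n" and drift: "\<And>q. w (q + n) = w q + 1"
  shows "card {q. q < n \<and> (\<forall>m\<in>{1..n}. w q < w (q + m))} = 1"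
proof -
  let ?R = "{q. q < n \<and> (\<forall>m\<in>{1..n}. w q < w (q + m))}"
  define mu where "mu = Min (w ` {..<n})"
  have mu_le: "mu \<le> w p" if "p < n" for p
    using that unfolding mu_def by simp
  have "mu \<in> w ` {..<n}" unfolding mu_def using n by (intro Min_in) auto
  then obtain p0 where "p0 < n" "w p0 = mu" by auto
  define q where "q = Max {p. p < n \<and> w p = mu}"
  have "q \<in> {p. p < n \<and> w p = mu}"
    unfolding q_def by (rule Max_in) (use \<open>p0 < n\<close> \<open>w p0 = mu\<close> in auto)
  then have q: "q < n" "w q = mu" by simp_all
  have q_last: "p \<le> q" if "p < n" "w p = mu" for p
    using that unfolding q_def by simp
  have "w q < w (q + m)" if m: "m \<in> {1..n}" for m
  proof (cases "q + m < n")
    case True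
    then show ?thesis using mu_le[OF True] q_last[OF True] m q by fastforce
  next
    case False
    then have "q + m = (q + m - n) + n" "q + m - n < n" using m q by auto
    then show ?thesis using drift[of "q + m - n"] mu_le[of "q + m - n"] q by simp
  qed
  then have "q \<in> ?R" using q by simp
  moreover have "\<not> (a \<in> ?R \<and> b \<in> ?R)" if "a < b" for a b
  proof
    assume ab: "a \<in> ?R \<and> b \<in> ?R"
    have "b - a \<in> {1..n}" "a + n - b \<in> {1..n}" using ab that by auto
    then have "w a < w (a + (b - a))" "w b < w (b + (a + n - b))" using ab by blast+
    moreover have "a + (b - a) = b" "b + (a + n - b) = a + n" using ab that by auto
    ultimately have "w a < w b" "w b < w (a + n)" by simp_all
    then show False using drift[of a] by linarith
  qed
  ultimately have "?R = {q}"
    by (metis (no_types, lifting) linorder_neqE_nat singletonD singletonI subsetI subset_antisym)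
  then show ?thesis by simp
qed

lemma cycle_lemma_weak:
  fixes w :: "nat \<Rightarrow> int"
  assumes n: "0 < n" and drift: "\<And>q. w (q + n) = w q - 1"
  shows "card {q. q < n \<and> (\<forall>m\<in>{1..<n}. w q \<le> w (q + m))} = 1"
proof -
  let ?R = "{q. q < n \<and> (\<forall>m\<in>{1..<n}. w q \<le> w (q + m))}"
  define mu where "mu = Min (w ` {..<n})"
  have mu_le: "mu \<le> w p" if "p < n" for p
    using that unfolding mu_def by simp
  have "mu \<in> w ` {..<n}" unfolding mu_def using n by (intro Min_in) auto
  then obtain p0 where "p0 < n" "w p0 = mu" by auto
  define q where "q = Min {p. p < n \<and> w p = mu}"
  have "q \<in> {p. p < n \<and> w p = mu}"
    unfolding q_def by (rule Min_in) (use \<open>p0 < n\<close> \<open>w p0 = mu\<close> in auto)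
  then have q: "q < n" "w q = mu" by simp_all
  have q_first: "q \<le> p" if "p < n" "w p = mu" for p
    using that unfolding q_def by simp
  have "w q \<le> w (q + m)" if m: "m \<in> {1..<n}" for m
  proof (cases "q + m < n")
    case True
    then show ?thesis using mu_le q by simp
  next
    case False
    then have p: "q + m = (q + m - n) + n" "q + m - n < q" using m q by auto
    then have "mu < w (q + m - n)" using mu_le[of "q + m - n"] q_first[of "q + m - n"] q by fastforce
    then show ?thesis using p drift[of "q + m - n"] q by simp
  qed
  then have "q \<in> ?R" using q by simp
  moreover have "\<not> (a \<in> ?R \<and> b \<in> ?R)" if "a < b" for a b
  proof
    assume ab: "a \<in> ?R \<and> b \<in> ?R"
    have "b - a \<in> {1..<n}" "a + n - b \<in> {1..<n}" using ab that by auto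
    then have "w a \<le> w (a + (b - a))" "w b \<le> w (b + (a + n - b))" using ab by blast+
    moreover have "a + (b - a) = b" "b + (a + n - b) = a + n" using ab that by auto
    ultimately have "w a \<le> w b" "w b \<le> w (a + n)" by simp_all
    then show False using drift[of a] by linarith
  qed
  ultimately have "?R = {q}"
    by (metis (no_types, lifting) linorder_neqE_nat singletonD singletonI subsetI subset_antisym)
  then show ?thesis by simp
qed

definition cyclic_prefix_sum :: "nat list \<Rightarrow> nat \<Rightarrow> nat" where
  "cyclic_prefix_sum a i = (\<Sum>l<i. a ! (l mod length a))"

lemma sum_list_rotate: "sum_list (rotate j (a :: 'a :: comm_monoid_add list)) = sum_list a"
  by (metis add.commute append_take_drop_id rotate_drop_take sum_list_append)

lemma sum_list_take_nth:
  "k \<le> length xs \<Longrightarrow> sum_list (take k (xs :: 'a :: comm_monoid_add list)) = (\<Sum>l<k. xs ! l)"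
  by (simp add: sum_list_sum_nth atLeast0LessThan min_def)

lemma cyclic_prefix_sum_window:
  assumes "k \<le> length a"
  shows "cyclic_prefix_sum a (j + k) = cyclic_prefix_sum a j + sum_list (take k (rotate j a))"
proof -
  have "(\<Sum>l<j + k. a ! (l mod length a))
      = (\<Sum>l<j. a ! (l mod length a)) + (\<Sum>l<k. a ! ((j + l) mod length a))"
    by (induction k) (auto simp: add.commute)
  also have "(\<Sum>l<k. a ! ((j + l) mod length a)) = sum_list (take k (rotate j a))"
    using assms by (simp add: sum_list_take_nth nth_rotate)
  finally show ?thesis unfolding cyclic_prefix_sum_def .
qed

lemma card_residue_split:
  fixes t n :: nat
  assumes t: "0 < t"
  shows "card {j. j < t * n \<and> P j} = (\<Sum>c<t. card {q. q < n \<and> P (c + t * q)})"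
proof -
  let ?f = "\<lambda>(c, q). c + t * q"
  let ?S = "SIGMA c:{..<t}. {q. q < n \<and> P (c + t * q)}"
  have "{j. j < t * n \<and> P j} = ?f ` ?S"
  proof (intro equalityI subsetI)
    fix j assume j: "j \<in> {j. j < t * n \<and> P j}"
    have "j div t < n" using j t by (simp add: less_mult_imp_div_less mult.commute)
    then show "j \<in> ?f ` ?S"
      using j t by (intro image_eqI[of _ _ "(j mod t, j div t)"]) auto
  next
    fix j assume "j \<in> ?f ` ?S"
    then obtain c q where cq: "c < t" "q < n" "P (c + t * q)" "j = c + t * q" by auto
    have "c + t * q < t * Suc q" using cq by simp
    also have "\<dots> \<le> t * n" using cq by (intro mult_le_mono2) auto
    finally show "j \<in> {j. j < t * n \<and> P j}" using cq by auto
  qed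
  moreover have "inj_on ?f ?S"
  proof (rule inj_onI)
    fix x y assume "x \<in> ?S" "y \<in> ?S" "?f x = ?f y"
    then obtain c q c' q' where cq: "x = (c, q)" "y = (c', q')" "c < t" "c' < t"
      "c + t * q = c' + t * q'" by auto
    then have "c = c'" by (metis mod_mult_self2 mod_less)
    then show "x = y" using cq t by simp
  qed
  ultimately have "card {j. j < t * n \<and> P j} = card ?S" by (simp add: card_image)
  then show ?thesis by (simp add: card_SigmaI)
qed

text \<open>They encode avoidance of A_{s,t} for S_1 resp. S_2.\<close>

definition strictly_above :: "nat \<Rightarrow> nat \<Rightarrow> nat \<Rightarrow> nat list \<Rightarrow> bool" where
  "strictly_above s t n a \<longleftrightarrow> (\<forall>m\<in>{1..n}. s * m < sum_list (take (m * t) a))"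

definition weakly_above :: "nat \<Rightarrow> nat \<Rightarrow> nat \<Rightarrow> nat list \<Rightarrow> bool" where
  "weakly_above s t n a \<longleftrightarrow> (\<forall>m\<in>{1..<n}. s * m \<le> sum_list (take (m * t) a))"

lemma block_sums_as_walk:
  fixes a :: "nat list" and w :: "nat \<Rightarrow> int"
  assumes len: "length a = t * n"
    and w: "\<And>q. w q = int (cyclic_prefix_sum a (c + t * q)) - int s * int q"
  shows "w (q + n) = w q + (int (sum_list a) - int s * int n)"
    and "m \<le> n \<Longrightarrow> s * m < sum_list (take (m * t) (rotate (c + t * q) a)) \<longleftrightarrow> w q < w (q + m)"
    and "m \<le> n \<Longrightarrow> s * m \<le> sum_list (take (m * t) (rotate (c + t * q) a)) \<longleftrightarrow> w q \<le> w (q + m)"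
proof -
  have incr: "int (sum_list (take (m * t) (rotate (c + t * q) a))) = int s * int m + (w (q + m) - w q)"
    if "m \<le> n" for m
  proof -
    have "m * t \<le> length a" using len that by (simp add: mult.commute)
    from cyclic_prefix_sum_window[OF this, of "c + t * q"]
    show ?thesis by (simp add: w algebra_simps)
  qed
  have "take (n * t) (rotate (c + t * q) a) = rotate (c + t * q) a" using len by (simp add: mult.commute)
  then show "w (q + n) = w q + (int (sum_list a) - int s * int n)"
    using incr[of n] by (simp add: sum_list_rotate)
  show "s * m < sum_list (take (m * t) (rotate (c + t * q) a)) \<longleftrightarrow> w q < w (q + m)" if "m \<le> n"
    using incr[OF that] by (smt (verit) of_nat_less_iff of_nat_mult)
  show "s * m \<le> sum_list (take (m * t) (rotate (c + t * q) a)) \<longleftrightarrow> w q \<le> w (q + m)" if "m \<le> n"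
    using incr[OF that] by (smt (verit) of_nat_le_iff of_nat_mult)
qed

lemma strictly_above_rotations:
  assumes t: "0 < t" and n: "0 < n" and len: "length a = t * n" and sum: "sum_list a = s * n + 1"
  shows "card {j. j < t * n \<and> strictly_above s t n (rotate j a)} = t"
proof -
  have "card {q. q < n \<and> strictly_above s t n (rotate (c + t * q) a)} = 1" for c
  proof -
    define w where "w q = int (cyclic_prefix_sum a (c + t * q)) - int s * int q" for q
    note walk = block_sums_as_walk[OF len, of w, OF w_def]
    have "w (q + n) = w q + 1" for q using walk(1) sum by simp
    moreover have "strictly_above s t n (rotate (c + t * q) a) \<longleftrightarrow> (\<forall>m\<in>{1..n}. w q < w (q + m))" for q
      unfolding strictly_above_def using walk(2) by auto
    ultimately show ?thesis using cycle_lemma_strict[OF n, of w] by simp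
  qed
  then show ?thesis using card_residue_split[OF t] by simp
qed

lemma weakly_above_rotations:
  assumes t: "0 < t" and n: "0 < n" and s: "0 < s" and len: "length a = t * n" and sum: "sum_list a = s * n - 1"
  shows "card {j. j < t * n \<and> weakly_above s t n (rotate j a)} = t"
proof -
  have "card {q. q < n \<and> weakly_above s t n (rotate (c + t * q) a)} = 1" for c
  proof -
    define w where "w q = int (cyclic_prefix_sum a (c + t * q)) - int s * int q" for q
    note walk = block_sums_as_walk[OF len, of w, OF w_def]
    have "int (sum_list a) = int s * int n - 1" using sum s n by (simp add: of_nat_diff)
    then have "w (q + n) = w q - 1" for q using walk(1) by simp
    moreover have "weakly_above s t n (rotate (c + t * q) a) \<longleftrightarrow> (\<forall>m\<in>{1..<n}. w q \<le> w (q + m))" for q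
      unfolding weakly_above_def using walk(3) by auto
    ultimately show ?thesis using cycle_lemma_weak[OF n, of w] by simp
  qed
  then show ?thesis using card_residue_split[OF t] by simp
qed

lemma rotation_double_count:
  fixes V :: "'a list set"
  assumes fin: "finite V" and closed: "\<And>a j. a \<in> V \<Longrightarrow> rotate j a \<in> V"
    and cyc: "\<And>a. a \<in> V \<Longrightarrow> card {j. j < K \<and> G (rotate j a)} = r"
  shows "K * card {a \<in> V. G a} = r * card V"
proof -
  have inj: "inj (rotate j)" for j :: nat
    by (simp add: rotate_def inj_fn inj_rotate1)
  have "card {a \<in> V. G (rotate j a)} = card {a \<in> V. G a}" for j
  proof -
    have "rotate j ` V = V"
      using fin closed inj_on_subset[OF inj subset_UNIV] by (intro endo_inj_surj) auto
    have "rotate j ` {a \<in> V. G (rotate j a)} = {a \<in> V. G a}"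
    proof (intro equalityI subsetI)
      fix b assume b: "b \<in> {a \<in> V. G a}"
      then obtain a where "a \<in> V" "b = rotate j a" using \<open>rotate j ` V = V\<close> by blast
      then show "b \<in> rotate j ` {a \<in> V. G (rotate j a)}" using b by blast
    qed (use closed in blast)
    then show ?thesis using card_image[OF inj_on_subset[OF inj subset_UNIV]] by metis
  qed
  then have "K * card {a \<in> V. G a} = (\<Sum>j<K. card {a \<in> V. G (rotate j a)})" by simp
  also have "\<dots> = (\<Sum>j<K. \<Sum>a\<in>V. if G (rotate j a) then 1 else 0)"
    using fin by (simp add: sum.inter_filter[symmetric] Collect_conj_eq)
  also have "\<dots> = (\<Sum>a\<in>V. \<Sum>j<K. if G (rotate j a) then 1 else 0)" by (rule sum.swap)
  also have "\<dots> = (\<Sum>a\<in>V. card {j. j < K \<and> G (rotate j a)})"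
  proof (intro sum.cong refl)
    fix a
    have "(\<Sum>j<K. if G (rotate j a) then 1 else 0) = card {j \<in> {..<K}. G (rotate j a)}"
      by (simp add: sum.inter_filter[symmetric])
    then show "(\<Sum>j<K. if G (rotate j a) then 1 else 0) = card {j. j < K \<and> G (rotate j a)}" by simp
  qed
  also have "\<dots> = r * card V" using cyc by simp
  finally show ?thesis .
qed

lemma compositions_finite: "finite {a :: nat list. length a = K \<and> sum_list a = M}"
proof (rule finite_subset)
  show "{a. length a = K \<and> sum_list a = M} \<subseteq> {a. set a \<subseteq> {..M} \<and> length a = K}"
    by (auto simp: member_le_sum_list)
  show "finite {a. set a \<subseteq> {..M} \<and> length a = K}" by (rule finite_lists_length_eq) simp
qed

lemma compositions_rotation_count:
  assumes "\<And>a. length a = K \<Longrightarrow> sum_list a = M \<Longrightarrow> card {j. j < K \<and> G (rotate j a)} = r"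
  shows "K * card {a :: nat list. length a = K \<and> sum_list a = M \<and> G a} = r * ((M + K - 1) choose M)"
proof -
  let ?V = "{a :: nat list. length a = K \<and> sum_list a = M}"
  have "K * card {a \<in> ?V. G a} = r * card ?V"
    using assms by (intro rotation_double_count compositions_finite) (auto simp: sum_list_rotate)
  moreover have "{a \<in> ?V. G a} = {a. length a = K \<and> sum_list a = M \<and> G a}" by auto
  ultimately show ?thesis by (simp add: card_length_sum_list)
qed

text \<open>A point is strictly right of the staircase if it lies in the lowest band y < t,
  or in band k = y div t strictly to the right of the vertical run at x = k*s.\<close>

definition right_of_stair :: "nat \<Rightarrow> nat \<Rightarrow> int \<Rightarrow> int \<Rightarrow> bool" where
  "right_of_stair s t x y \<longleftrightarrow> y < int t \<or> int s * (y div int t) < x"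

lemma right_of_stair_mono: "right_of_stair s t x y \<Longrightarrow> x \<le> x' \<Longrightarrow> right_of_stair s t x' y"
  unfolding right_of_stair_def by auto

lemma right_of_stair_nat:
  "right_of_stair s t (int x) (int y) \<longleftrightarrow> y < t \<or> s * (y div t) < x"
  unfolding right_of_stair_def by (simp add: zdiv_int[symmetric] of_nat_mult[symmetric] del: of_nat_mult)

lemma right_of_stair_not_staircase:
  assumes t: "0 < t" and r: "right_of_stair s t x y"
  shows "(x, y) \<notin> staircase_points s t"
proof
  assume "(x, y) \<in> staircase_points s t"
  then obtain k :: nat where "(y = int ((k + 1) * t) \<and> int (k * s) \<le> x \<and> x \<le> int ((k + 1) * s))
      \<or> (x = int ((k + 1) * s) \<and> int ((k + 1) * t) \<le> y \<and> y \<le> int ((k + 2) * t))"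
    unfolding staircase_points_def by auto
  then show False
  proof
    assume h: "y = int ((k + 1) * t) \<and> int (k * s) \<le> x \<and> x \<le> int ((k + 1) * s)"
    then have "y div int t = int (k + 1)" using t by simp
    moreover have "\<not> y < int t" using h t by (simp add: mult_less_0_iff)
    ultimately show False using r h unfolding right_of_stair_def by (simp add: algebra_simps)
  next
    assume h: "x = int ((k + 1) * s) \<and> int ((k + 1) * t) \<le> y \<and> y \<le> int ((k + 2) * t)"
    then have y: "int (k + 1) * int t \<le> y" by (simp add: algebra_simps)
    then have "(int (k + 1) * int t) div int t \<le> y div int t" using t by (intro zdiv_mono1) auto
    then have "int s * int (k + 1) \<le> int s * (y div int t)" using t by (simp add: mult_left_mono)
    moreover have "int t \<le> int (k + 1) * int t" by (simp add: algebra_simps)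
    then have "\<not> y < int t" using y by linarith
    ultimately show False using r h unfolding right_of_stair_def by (simp add: algebra_simps)
  qed
qed

text \<open>A north step that leaves the region right of the staircase lands on the
  staircase: it must cross a horizontal run at height (k+1)*t between k*s and (k+1)*s.\<close>

lemma north_exit_hits_staircase:
  assumes t: "0 < t" and x: "0 \<le> x" and r: "right_of_stair s t x (int y)"
    and nr: "\<not> right_of_stair s t x (int y + 1)"
  shows "(x, int y + 1) \<in> staircase_points s t"
proof -
  have nr': "\<not> Suc y < t" "\<not> int s * int (Suc y div t) < x"
    using nr unfolding right_of_stair_def by (simp_all add: zdiv_int add.commute)
  have r': "y < t \<or> int s * int (y div t) < x"
    using r unfolding right_of_stair_def by (simp add: zdiv_int[symmetric])
  have "Suc y mod t = 0"
  proof (rule ccontr)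
    assume h: "Suc y mod t \<noteq> 0"
    then have "Suc y div t = y div t" by (simp add: div_Suc)
    moreover have "\<not> y < t"
    proof
      assume "y < t"
      then have "Suc y = t" using nr'(1) by simp
      then show False using h by simp
    qed
    ultimately show False using r' nr' by simp
  qed
  then have q: "Suc y = (Suc y div t) * t" using div_mult_mod_eq[of "Suc y" t] by simp
  define k where "k = Suc y div t - 1"
  have "0 < Suc y div t" using nr'(1) t by (simp add: div_greater_zero_iff)
  then have div: "Suc y div t = k + 1" unfolding k_def by simp
  with q have k: "Suc y = (k + 1) * t" by simp
  have "int (k * s) \<le> x"
  proof (cases "y < t")
    case True
    then have "k = 0" using Suc_leI[OF True] k t by simp
    then show ?thesis using x by simp
  next
    case False
    then have "y div t = k" using div \<open>Suc y mod t = 0\<close> by (simp add: div_Suc mod_Suc split: if_splits)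
    then show ?thesis using r' False by (simp add: mult.commute)
  qed
  moreover have "x \<le> int ((k + 1) * s)" using nr'(2) div by (simp add: algebra_simps)
  moreover have "int y + 1 = int ((k + 1) * t)" using k by (metis of_nat_Suc add.commute)
  ultimately show ?thesis unfolding staircase_points_def by (auto intro!: exI[of _ k])
qed

lemma path_points_hd: "p \<in> set (path_points p bs)"
  by (cases p; cases bs) auto

lemma last_path_points:
  "last (path_points (x, y) bs) = (x + int (length (filter id bs)), y + int (length (filter Not bs)))"
proof (induction bs arbitrary: x y)
  case (Cons b bs)
  have "path_points p bs \<noteq> []" for p by (cases p; cases bs) auto
  then show ?case using Cons by (cases b) (auto simp: algebra_simps)
qed simp

text \<open>Starting right of the staircase in the right half plane, a path avoids A_{s,t}
  iff all its points stay right of the staircase: an east step can never leave the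
  region, and a north step leaving it lands on the staircase.\<close>

lemma avoids_iff_right_of_stair:
  assumes t: "0 < t" and "0 \<le> x" "0 \<le> y" "right_of_stair s t x y"
  shows "set (path_points (x, y) bs) \<inter> staircase_points s t = {}
     \<longleftrightarrow> (\<forall>(u, v)\<in>set (path_points (x, y) bs). right_of_stair s t u v)"
  using assms(2-)
proof (induction bs arbitrary: x y)
  case Nil
  then show ?case using right_of_stair_not_staircase[OF t] by auto
next
  case (Cons b bs)
  have start: "(x, y) \<notin> staircase_points s t" using right_of_stair_not_staircase[OF t] Cons.prems by auto
  show ?case
  proof (cases b)
    case True
    have "right_of_stair s t (x + 1) y" using Cons.prems right_of_stair_mono by fastforce
    then show ?thesis using Cons True start by auto
  next
    case north: False
    show ?thesis
    proof (cases "right_of_stair s t x (y + 1)")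
      case True
      then show ?thesis using Cons north start by auto
    next
      case False
      obtain y' where y': "y = int y'" using Cons.prems(2) by (metis nonneg_int_cases)
      have "(x, y + 1) \<in> staircase_points s t"
        using north_exit_hits_staircase[OF t, where x=x and y=y'] Cons.prems False y' by auto
      moreover have "(x, y + 1) \<in> set (path_points (x, y + 1) bs)" by (rule path_points_hd)
      ultimately show ?thesis using north False by auto
    qed
  qed
qed

fun runs_path :: "nat list \<Rightarrow> nat \<Rightarrow> bool list" where
  "runs_path [] k = replicate k True"
| "runs_path (c # a) k = replicate c True @ False # runs_path a k"

fun decode_runs :: "bool list \<Rightarrow> nat list \<times> nat" where
  "decode_runs [] = ([], 0)"
| "decode_runs (b # bs) = (case decode_runs bs of (a, k) \<Rightarrow>
     if b then (case a of [] \<Rightarrow> ([], Suc k) | c # a' \<Rightarrow> (Suc c # a', k)) else (0 # a, k))"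

lemma runs_path_decode_runs: "runs_path (fst (decode_runs bs)) (snd (decode_runs bs)) = bs"
proof (induction bs)
  case (Cons b bs)
  obtain a k where ak: "decode_runs bs = (a, k)" by (cases "decode_runs bs")
  then show ?case using Cons by (cases b; cases a) auto
qed simp

lemma decode_runs_runs_path: "decode_runs (runs_path a k) = (a, k)"
proof -
  have final_run: "decode_runs (replicate k True) = ([], k)" by (induction k) auto
  have north: "decode_runs (replicate c True @ False # rest)
      = (c # fst (decode_runs rest), snd (decode_runs rest))" for c rest
    by (induction c) (auto split: prod.splits)
  show ?thesis by (induction a) (simp_all add: final_run north)
qed

lemma runs_path_inj: "runs_path a k = runs_path a' k' \<Longrightarrow> a = a' \<and> k = k'"
  by (metis decode_runs_runs_path prod.inject)

lemma last_runs_path: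
  "last (path_points (x, y) (runs_path a k)) = (x + int (sum_list a + k), y + int (length a))"
proof -
  have "length (filter id (runs_path a k)) = sum_list a + k"
    "length (filter Not (runs_path a k)) = length a" by (induction a) auto
  then show ?thesis by (simp add: last_path_points)
qed

lemma path_points_east_run:
  "set (path_points (x, y) (replicate c True @ bs))
     = (\<lambda>i. (x + int i, y)) ` {..<c} \<union> set (path_points (x + int c, y) bs)"
proof (induction c arbitrary: x)
  case (Suc c)
  have "{..<Suc c} = insert 0 (Suc ` {..<c})" by (rule lessThan_Suc_eq_insert_0)
  then show ?case using Suc[of "x + 1"] by (auto simp: image_image algebra_simps)
qed simp

lemma ball_atLeastAtMost_Suc: "(\<forall>j\<in>{1..Suc L}. P j) \<longleftrightarrow> P 1 \<and> (\<forall>j\<in>{1..L}. P (Suc j))"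
proof
  assume H: "P 1 \<and> (\<forall>j\<in>{1..L}. P (Suc j))"
  show "\<forall>j\<in>{1..Suc L}. P j"
  proof
    fix j assume j: "j \<in> {1..Suc L}"
    then obtain j' where j': "j = Suc j'" by (cases j) auto
    then show "P j" using H j by (cases j') auto
  qed
qed auto

text \<open>Along an encoded path starting right of the staircase it suffices to check the
  point reached by each north step: an east run never leaves the region.\<close>

lemma runs_path_right_of_stair:
  assumes "right_of_stair s t x y"
  shows "(\<forall>(u, v)\<in>set (path_points (x, y) (runs_path a k)). right_of_stair s t u v)
     \<longleftrightarrow> (\<forall>j\<in>{1..length a}. right_of_stair s t (x + int (sum_list (take j a))) (y + int j))"
  using assms
proof (induction a arbitrary: x y)
  case Nil
  then show ?case
    using path_points_east_run[of x y k "[]"] right_of_stair_mono by fastforce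
next
  case (Cons c a)
  let ?rest = "set (path_points (x + int c, y + 1) (runs_path a k))"
  have run: "right_of_stair s t (x + int i) y" for i
    using Cons.prems right_of_stair_mono by simp
  have pts: "set (path_points (x, y) (runs_path (c # a) k))
      = (\<lambda>i. (x + int i, y)) ` {..<c} \<union> insert (x + int c, y) ?rest"
    using path_points_east_run[of x y c "False # runs_path a k"] by simp
  have points: "(\<forall>(u, v)\<in>set (path_points (x, y) (runs_path (c # a) k)). right_of_stair s t u v)
      \<longleftrightarrow> (\<forall>(u, v)\<in>?rest. right_of_stair s t u v)"
  proof -
    have "\<forall>(u, v)\<in>(\<lambda>i. (x + int i, y)) ` {..<c} \<union> {(x + int c, y)}. right_of_stair s t u v"
      using run by auto
    then show ?thesis unfolding pts by blast
  qed
  have rows: "(\<forall>j\<in>{1..length (c # a)}. right_of_stair s t (x + int (sum_list (take j (c # a)))) (y + int j))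
      \<longleftrightarrow> right_of_stair s t (x + int c) (y + 1)
          \<and> (\<forall>j\<in>{1..length a}. right_of_stair s t (x + int c + int (sum_list (take j a))) (y + 1 + int j))"
    using ball_atLeastAtMost_Suc[of "length a"
        "\<lambda>j. right_of_stair s t (x + int (sum_list (take j (c # a)))) (y + int j)"]
    by (simp add: algebra_simps)
  show ?case
  proof (cases "right_of_stair s t (x + int c) (y + 1)")
    case True
    with points rows Cons.IH[OF True] show ?thesis by argo
  next
    case False
    have "(x + int c, y + 1) \<in> ?rest" by (rule path_points_hd)
    with points rows False show ?thesis by fastforce
  qed
qed

lemma row_condition_iff:
  fixes f :: "nat \<Rightarrow> nat"
  assumes t: "0 < t" and f: "mono f"
  shows "(\<forall>j\<in>{1..J}. j < t \<or> s * (j div t) < f j) \<longleftrightarrow> (\<forall>m. 0 < m \<and> m * t \<le> J \<longrightarrow> s * m < f (m * t))"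
proof
  assume H: "\<forall>j\<in>{1..J}. j < t \<or> s * (j div t) < f j"
  show "\<forall>m. 0 < m \<and> m * t \<le> J \<longrightarrow> s * m < f (m * t)"
  proof (intro allI impI)
    fix m assume m: "0 < m \<and> m * t \<le> J"
    then have "m * t \<in> {1..J}" "\<not> m * t < t" using t by auto
    then show "s * m < f (m * t)" using H t by fastforce
  qed
next
  assume H: "\<forall>m. 0 < m \<and> m * t \<le> J \<longrightarrow> s * m < f (m * t)"
  show "\<forall>j\<in>{1..J}. j < t \<or> s * (j div t) < f j"
  proof
    fix j assume j: "j \<in> {1..J}"
    show "j < t \<or> s * (j div t) < f j"
    proof (cases "j < t")
      case False
      have "j div t * t \<le> j" by (rule div_times_less_eq_dividend)
      then have "j div t * t \<le> J" using j by (meson atLeastAtMost_iff le_trans)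
      moreover have "0 < j div t" using False t by (simp add: div_greater_zero_iff)
      ultimately have "s * (j div t) < f (j div t * t)" using H by blast
      also have "\<dots> \<le> f j" using f \<open>j div t * t \<le> j\<close> by (rule monoD)
      finally show ?thesis by simp
    qed simp
  qed
qed

lemma sum_list_take_mono: "i \<le> j \<Longrightarrow> sum_list (take i (a :: nat list)) \<le> sum_list (take j a)"
  by (metis le_add1 le_add_diff_inverse sum_list_append take_add)

lemma avoids_runs_path_iff:
  assumes t: "0 < t"
  shows "avoids (int x0, 0) (runs_path a k) s t
     \<longleftrightarrow> (\<forall>m. 0 < m \<and> m * t \<le> length a \<longrightarrow> s * m < x0 + sum_list (take (m * t) a))"
proof -
  have start: "right_of_stair s t (int x0) 0" using t unfolding right_of_stair_def by simp
  have "avoids (int x0, 0) (runs_path a k) s t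
      \<longleftrightarrow> (\<forall>(u, v)\<in>set (path_points (int x0, 0) (runs_path a k)). right_of_stair s t u v)"
    unfolding avoids_def by (rule avoids_iff_right_of_stair[OF t]) (use start in auto)
  also have "\<dots> \<longleftrightarrow> (\<forall>j\<in>{1..length a}. right_of_stair s t (int x0 + int (sum_list (take j a))) (0 + int j))"
    by (rule runs_path_right_of_stair[OF start])
  also have "\<dots> \<longleftrightarrow> (\<forall>j\<in>{1..length a}. j < t \<or> s * (j div t) < x0 + sum_list (take j a))"
    using right_of_stair_nat[of s t "x0 + sum_list (take _ a)"] by simp
  also have "\<dots> \<longleftrightarrow> (\<forall>m. 0 < m \<and> m * t \<le> length a \<longrightarrow> s * m < x0 + sum_list (take (m * t) a))"
    by (rule row_condition_iff[OF t]) (simp add: mono_def sum_list_take_mono)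
  finally show ?thesis .
qed

lemma runs_path_in_lattice_paths:
  "runs_path a k \<in> lattice_paths (x, y) (x', y')
     \<longleftrightarrow> x' = x + int (sum_list a + k) \<and> y' = y + int (length a)"
  unfolding lattice_paths_def by (auto simp: last_runs_path)

text \<open>Counting S_1: its paths correspond to the lists a of length t*n and sum s*n+1
  that are strictly above (the final east run is forced to be empty), and exactly
  t of the t*n rotations of every such list are strictly above.\<close>

lemma avoiding_paths_count1:
  assumes t: "0 < t" and n: "0 < n"
  shows "n * card {bs \<in> lattice_paths (0, 0) (int (s * n + 1), int (t * n)). avoids (0, 0) bs s t}
         = (s * n + t * n) choose (s * n + 1)"
proof -
  let ?A = "{bs \<in> lattice_paths (0, 0) (int (s * n + 1), int (t * n)). avoids (0, 0) bs s t}"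
  let ?C = "{a. length a = t * n \<and> sum_list a = s * n + 1 \<and> strictly_above s t n a}"
  have above: "strictly_above s t n a
      \<longleftrightarrow> (\<forall>m. 0 < m \<and> m * t \<le> length a \<longrightarrow> s * m < 0 + sum_list (take (m * t) a))"
    if "length a = t * n" for a
    using that t unfolding strictly_above_def by (auto simp: mult.commute)
  have endpoint: "runs_path a k \<in> lattice_paths (0, 0) (int (s * n + 1), int (t * n))
      \<longleftrightarrow> length a = t * n \<and> sum_list a + k = s * n + 1" for a k
    by (auto simp: runs_path_in_lattice_paths simp del: of_nat_add of_nat_mult)
  have member: "runs_path a k \<in> ?A
      \<longleftrightarrow> length a = t * n \<and> sum_list a + k = s * n + 1 \<and> strictly_above s t n a" for a k
    using avoids_runs_path_iff[OF t, of 0 a k s] endpoint above by auto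
  have "?A = (\<lambda>a. runs_path a 0) ` ?C"
  proof (intro equalityI subsetI)
    fix bs assume bs: "bs \<in> ?A"
    obtain a k where bs_def: "bs = runs_path a k"
      using runs_path_decode_runs[of bs] by metis
    then have a: "length a = t * n" "sum_list a + k = s * n + 1" "strictly_above s t n a"
      using bs member by auto
    have "n \<in> {1..n}" using n by simp
    then have "s * n < sum_list (take (n * t) a)" using a(3) unfolding strictly_above_def by blast
    then have "s * n < sum_list a" using a(1) by (simp add: mult.commute)
    then have "k = 0" using a(2) by simp
    then show "bs \<in> (\<lambda>a. runs_path a 0) ` ?C" using a bs_def by auto
  next
    fix bs assume "bs \<in> (\<lambda>a. runs_path a 0) ` ?C"
    then obtain a where a: "a \<in> ?C" and bs_def: "bs = runs_path a 0" by auto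
    have "runs_path a 0 \<in> ?A" unfolding member using a by simp
    then show "bs \<in> ?A" using bs_def by simp
  qed
  moreover have "inj_on (\<lambda>a. runs_path a 0) ?C" by (auto intro: inj_onI dest: runs_path_inj)
  ultimately have "card ?A = card ?C" by (simp add: card_image)
  moreover have "t * n * card ?C = t * ((s * n + 1 + t * n - 1) choose (s * n + 1))"
    using strictly_above_rotations[OF t n] by (intro compositions_rotation_count)
  ultimately show ?thesis using t by (simp add: mult.assoc)
qed

text \<open>Counting S_2: appending the final east run to the list of earlier runs gives
  the lists of length t*n and sum s*n-1 that are weakly above.\<close>

lemma avoiding_paths_count2:
  assumes s: "0 < s" and t: "0 < t" and n: "0 < n"
  shows "n * card {bs \<in> lattice_paths (1, 0) (int (s * n), int (t * n) - 1). avoids (1, 0) bs s t}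
         = (s * n - 1 + t * n - 1) choose (s * n - 1)"
proof -
  let ?A = "{bs \<in> lattice_paths (1, 0) (int (s * n), int (t * n) - 1). avoids (1, 0) bs s t}"
  let ?C = "{b. length b = t * n \<and> sum_list b = s * n - 1 \<and> weakly_above s t n b}"
  let ?f = "\<lambda>b. runs_path (butlast b) (last b)"
  have tn: "1 \<le> t * n" "1 \<le> s * n" using s t n by auto
  have above: "weakly_above s t n (a @ [k])
      \<longleftrightarrow> (\<forall>m. 0 < m \<and> m * t \<le> length a \<longrightarrow> s * m < 1 + sum_list (take (m * t) a))"
    if len: "length a = t * n - 1" for a k
  proof -
    have rows: "m * t \<le> length a \<longleftrightarrow> m < n" for m
    proof -
      have "m * t \<le> length a \<longleftrightarrow> m * t < t * n" using len tn(1) by linarith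
      also have "\<dots> \<longleftrightarrow> m < n" using t by (simp add: mult.commute)
      finally show ?thesis .
    qed
    have "take (m * t) (a @ [k]) = take (m * t) a" if "m < n" for m
      using rows[of m] that by simp
    then show ?thesis unfolding weakly_above_def using rows by (auto simp: less_Suc_eq_le Suc_le_eq)
  qed
  have endpoint: "(int (s * n), int (t * n) - 1) = (1 + int (s * n - 1), 0 + int (t * n - 1))"
    using tn by (simp add: of_nat_diff)
  have member: "runs_path a k \<in> ?A
      \<longleftrightarrow> length a = t * n - 1 \<and> sum_list a + k = s * n - 1 \<and> weakly_above s t n (a @ [k])" for a k
    using avoids_runs_path_iff[OF t, of 1 a k s] runs_path_in_lattice_paths[of a k 1 0] above
    unfolding endpoint by auto
  have "?A = ?f ` ?C"
  proof (intro equalityI subsetI)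
    fix bs assume bs: "bs \<in> ?A"
    obtain a k where bs_def: "bs = runs_path a k"
      using runs_path_decode_runs[of bs] by metis
    then have "a @ [k] \<in> ?C" using bs member tn by auto
    then show "bs \<in> ?f ` ?C" using bs_def by (auto intro!: image_eqI[of _ _ "a @ [k]"])
  next
    fix bs assume "bs \<in> ?f ` ?C"
    then obtain b where b: "b \<in> ?C" and bs_def: "bs = ?f b" by auto
    then have b_snoc: "b = butlast b @ [last b]" using tn by (intro append_butlast_last_id[symmetric]) auto
    have "length (butlast b) = t * n - 1" using b by simp
    moreover have "sum_list (butlast b) + last b = s * n - 1"
      using arg_cong[OF b_snoc, of sum_list] b by simp
    moreover have "weakly_above s t n (butlast b @ [last b])"
      unfolding b_snoc[symmetric] using b by simp
    ultimately have "?f b \<in> ?A" unfolding member by blast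
    then show "bs \<in> ?A" using bs_def by simp
  qed
  moreover have "inj_on ?f ?C"
  proof (rule inj_onI)
    fix b b' assume "b \<in> ?C" "b' \<in> ?C" "?f b = ?f b'"
    moreover have "b \<noteq> []" "b' \<noteq> []" using calculation tn by auto
    moreover have "butlast b = butlast b'" "last b = last b'"
      using runs_path_inj \<open>?f b = ?f b'\<close> by blast+
    ultimately show "b = b'" by (metis append_butlast_last_id)
  qed
  ultimately have "card ?A = card ?C" by (simp add: card_image)
  moreover have "t * n * card ?C = t * ((s * n - 1 + t * n - 1) choose (s * n - 1))"
    using weakly_above_rotations[OF t n s] by (intro compositions_rotation_count)
  ultimately show ?thesis using t by (simp add: mult.assoc)
qed

text \<open>Turning n*|S_1| = C(S+T, S+1) into t*C(S+T, T) - s*C(S+T, T-1), where S = s*n and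
  T = t*n, using T*C(S+T, T) = (S+1)*C(S+T, T-1).\<close>

lemma ballot_formula1:
  fixes n c S T :: nat
  assumes n: "0 < n" and T: "1 \<le> T" and c: "n * c = (S + T) choose (S + 1)"
    and ST: "S = s * n" "T = t * n"
  shows "int c = int t * zbinom (S + T) (int T) - int s * zbinom (S + T) (int T - 1)"
proof -
  obtain T' where T': "T = Suc T'" using T by (cases T) auto
  have z1: "zbinom (S + T) (int T) = int ((S + T) choose T)" unfolding zbinom_def by simp
  have z2: "zbinom (S + T) (int T - 1) = int ((S + T) choose T')" unfolding zbinom_def using T' by simp
  have "(S + T) choose (S + 1) = (S + T) choose T'"
    using binomial_symmetric[of "S + 1" "S + T"] T' by simp
  then have nc: "int n * int c = int ((S + T) choose T')" using c by (metis of_nat_mult)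
  have "T * ((S + T) choose T) = (S + 1) * ((S + T) choose T')"
    using Suc_times_binomial_add[of T' S] T' by (simp add: add.commute)
  then have "int T * int ((S + T) choose T) - int S * int ((S + T) choose T') = int ((S + T) choose T')"
    by (metis (no_types, lifting) add_diff_cancel_left' distrib_right mult_1 of_nat_1 of_nat_add of_nat_mult)
  then have "int n * (int t * int ((S + T) choose T) - int s * int ((S + T) choose T')) = int n * int c"
    using ST nc by (simp add: algebra_simps)
  then show ?thesis using n z1 z2 by simp
qed

text \<open>Turning n*|S_2| = C(M, S-1), M = S+T-2, into t*C(M, T-1) - s*C(M, T-2), using
  (T-1)*C(M, T-1) = S*C(M, T-2).\<close>

lemma ballot_formula2:
  fixes n c S T :: nat
  assumes n: "0 < n" and T: "1 \<le> T" and S: "1 \<le> S" and c: "n * c = (S - 1 + T - 1) choose (S - 1)"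
    and ST: "S = s * n" "T = t * n"
  shows "int c = int t * zbinom (S + T - 2) (int T - 1) - int s * zbinom (S + T - 2) (int T - 2)"
proof -
  obtain T' where T': "T = Suc T'" using T by (cases T) auto
  obtain S' where S': "S = Suc S'" using S by (cases S) auto
  define M where "M = S' + T'"
  have M: "S + T - 2 = M" "S - 1 + T - 1 = M" using S' T' M_def by auto
  have z1: "zbinom M (int T - 1) = int (M choose T')" unfolding zbinom_def using T' by simp
  have "M choose S' = M choose T'" using binomial_symmetric[of S' M] M_def by simp
  then have nc: "int n * int c = int (M choose T')" using c M S' by (metis diff_Suc_1 of_nat_mult)
  show ?thesis
  proof (cases T')
    case 0
    then have "t = 1" "n = 1" using ST T' by simp_all
    moreover have "zbinom M (int T - 2) = 0" unfolding zbinom_def using T' 0 by simp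
    ultimately show ?thesis using nc M z1 0 by simp
  next
    case (Suc T'')
    have z2: "zbinom M (int T - 2) = int (M choose T'')" unfolding zbinom_def using T' Suc by simp
    have "T' * (M choose T') = S * (M choose T'')"
      using Suc_times_binomial_add[of T'' S'] Suc S' M_def by (simp add: add.commute)
    then have "int T * int (M choose T') - int S * int (M choose T'') = int (M choose T')"
      using T' by (metis (no_types, lifting) add_diff_cancel_right' distrib_right mult_1
          of_nat_1 of_nat_Suc of_nat_mult)
    then have "int n * (int t * int (M choose T') - int s * int (M choose T'')) = int n * int c"
      using ST nc by (simp add: algebra_simps)
    then show ?thesis using n z1 z2 M by simp
  qed
qed

theorem corollary1p2:
  fixes s t n :: nat
  assumes "0 < s" and "0 < t" and "0 < n"
  shows "int (card {bs \<in> lattice_paths (0, 0) (int (s * n + 1), int (t * n)). avoids (0, 0) bs s t})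
           = int t * zbinom (s * n + t * n) (int (t * n)) - int s * zbinom (s * n + t * n) (int (t * n) - 1)
       \<and> int (card {bs \<in> lattice_paths (1, 0) (int (s * n), int (t * n) - 1). avoids (1, 0) bs s t})
           = int t * zbinom (s * n + t * n - 2) (int (t * n) - 1) - int s * zbinom (s * n + t * n - 2) (int (t * n) - 2)"
proof
  have tn: "1 \<le> t * n" and sn: "1 \<le> s * n" using assms by auto
  show "int (card {bs \<in> lattice_paths (0, 0) (int (s * n + 1), int (t * n)). avoids (0, 0) bs s t})
           = int t * zbinom (s * n + t * n) (int (t * n)) - int s * zbinom (s * n + t * n) (int (t * n) - 1)"
    using ballot_formula1[OF assms(3) tn avoiding_paths_count1[OF assms(2,3)]] by simp
  show "int (card {bs \<in> lattice_paths (1, 0) (int (s * n), int (t * n) - 1). avoids (1, 0) bs s t})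
           = int t * zbinom (s * n + t * n - 2) (int (t * n) - 1) - int s * zbinom (s * n + t * n - 2) (int (t * n) - 2)"
    using ballot_formula2[OF assms(3) tn sn avoiding_paths_count2[OF assms]] by simp
qed

end
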